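(* Let $\theta(q,x):=\sum_{j=0}^{\infty}q^{j(j+1)/2}x^j$. For every $q\in(0,1)$, the function $x\mapsto\theta(q,x)$ has no purely imaginary zeros of modulus $\leq 2.2$; in particular it has no purely imaginary zeros of modulus $\leq 3/\sqrt{2}$. *)

theory Defs
  imports "HOL-Analysis.Analysis"
begin

definition theta :: "real \<Rightarrow> complex \<Rightarrow> complex" where
  "theta q x = (\<Sum>j. complex_of_real (q ^ (j * (j + 1) div 2)) * x ^ j)"

end

(* On the imaginary axis, Im theta(q, iy) = q y P(q^4, -q y^2), where
   P(r, x) = sum of r^(j(j+1)/2) x^j is the partial theta function on the real line.
   So it suffices to show P(r, -z) > 0 for 0 < r < 1 and 0 <= z <= 2.2^2 = 4.84.

   When r z <= 1, or r <= 0.43, the alternating series is bounded below by its truncation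
   1 - u + r u^2 - r^3 u^3 at u = r z; for r <= 0.43 the positivity of this cubic is
   certified by Bernstein coefficients on a few boxes.

   Otherwise write P(r, -z) = Th(r, -z) + P(r, -1/z)/z, where Th(r, x) is the bilateral
   series of r^(n(n+1)/2) x^n over all integers n. By Jacobi's triple product,
   0 <= Th(r, -w) <= (r;r)_oo^3 for 1 <= w <= 1/r, and the functional equation
   Th(r, x) = r x Th(r, r x) moves -z into this range, giving
   |Th(r, -z)| <= r^(n(n+1)/2) z^n (r;r)_oo^3 for the n with 1 <= r^n z <= 1/r.
   Explicit bounds on (r;r)_oo show that this is smaller than (1 - r^2)/z <= P(r, -1/z)/z. *)

theory Submission
  imports Defs
begin

definition triangular :: "nat \<Rightarrow> nat" where
  "triangular j = j * (j + 1) div 2"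

lemma triangular_0 [simp]: "triangular 0 = 0"
  by (simp add: triangular_def)

lemma triangular_Suc: "triangular (Suc j) = triangular j + Suc j"
proof -
  have "Suc j * (Suc j + 1) = j * (j + 1) + 2 * Suc j" by (simp add: algebra_simps)
  then show ?thesis unfolding triangular_def by simp
qed

lemma two_triangular: "2 * triangular k = k * (k + 1)"
  unfolding triangular_def by simp

lemma triangular_add: "triangular (j + d) = triangular j + j * d + triangular d"
  by (induction d) (simp_all add: triangular_Suc)

lemma triangular_diff_one_add: "triangular (i - 1) + i = triangular i"
  by (cases i) (simp_all add: triangular_Suc)

lemma triangular_odd: "triangular (2 * k + 1) = 4 * triangular k + k + 1"
  using two_triangular[of "2 * k + 1"] two_triangular[of k] by (simp add: algebra_simps)

lemma real_triangular_ge: "real n ^ 2 / 2 \<le> real (triangular n)"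
proof -
  have "real (2 * triangular n) = real (n * (n + 1))"
    by (simp only: two_triangular)
  then show ?thesis by (simp add: power2_eq_square algebra_simps)
qed

section \<open>The partial theta function on the real line\<close>

definition partial_theta :: "real \<Rightarrow> real \<Rightarrow> real" where
  "partial_theta r x = (\<Sum>j. r ^ triangular j * x ^ j)"

lemma summable_partial_theta:
  fixes r x :: real
  assumes r: "0 \<le> r" "r < 1"
  shows "summable (\<lambda>j. r ^ triangular j * x ^ j)"
proof -
  have "(\<lambda>n. r ^ n * \<bar>x\<bar>) \<longlonglongrightarrow> 0 * \<bar>x\<bar>"
    by (intro tendsto_mult LIMSEQ_power_zero tendsto_const) (use r in auto)
  then obtain N where N: "\<And>n. n \<ge> N \<Longrightarrow> r ^ n * \<bar>x\<bar> < 1/2"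
    using LIMSEQ_D[of _ 0 "1/2"] r by fastforce
  show ?thesis
  proof (rule summable_ratio_test[where c = "1/2" and N = N])
    fix n assume "N \<le> n"
    have "norm (r ^ triangular (Suc n) * x ^ Suc n) = (r ^ Suc n * \<bar>x\<bar>) * norm (r ^ triangular n * x ^ n)"
      using r by (simp add: triangular_Suc power_add abs_mult power_abs algebra_simps)
    also have "\<dots> \<le> 1/2 * norm (r ^ triangular n * x ^ n)"
      using N[of "Suc n"] \<open>N \<le> n\<close> by (intro mult_right_mono) auto
    finally show "norm (r ^ triangular (Suc n) * x ^ Suc n) \<le> 1/2 * norm (r ^ triangular n * x ^ n)" .
  qed simp
qed

lemma partial_theta_0 [simp]: "partial_theta r 0 = 1"
  unfolding partial_theta_def by (subst powser_zero) simp

lemma partial_theta_rec: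
  assumes r: "0 \<le> r" "r < 1"
  shows "partial_theta r x = 1 + r * x * partial_theta r (r * x)"
proof -
  have "partial_theta r x = (\<Sum>j. r ^ triangular (Suc j) * x ^ Suc j) + 1"
    unfolding partial_theta_def using suminf_split_head[OF summable_partial_theta[OF r]] by simp
  also have "(\<lambda>j. r ^ triangular (Suc j) * x ^ Suc j) = (\<lambda>j. r * x * (r ^ triangular j * (r * x) ^ j))"
    by (auto simp: triangular_Suc power_add power_mult_distrib algebra_simps)
  also have "(\<Sum>j. r * x * (r ^ triangular j * (r * x) ^ j)) = r * x * partial_theta r (r * x)"
    unfolding partial_theta_def using suminf_mult[OF summable_partial_theta[OF r]] by simp
  finally show ?thesis by simp
qed

definition cubic_minorant :: "real \<Rightarrow> real \<Rightarrow> real" where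
  "cubic_minorant r u = 1 - u + r * u ^ 2 - r ^ 3 * u ^ 3"

text \<open>Once r^3 z \<le> 1, the terms of the alternating series decrease from the
  third one on, so the Leibniz bound applies after the first two terms.\<close>
lemma cubic_minorant_le_partial_theta:
  fixes r z :: real
  assumes r: "0 < r" "r < 1" and z: "0 \<le> z" and rz: "r ^ 3 * z \<le> 1"
  shows "cubic_minorant r (r * z) \<le> partial_theta r (- z)"
proof -
  define a where "a j = r ^ triangular j * z ^ j" for j
  have a_nonneg: "0 \<le> a j" for j
    unfolding a_def using r z by simp
  have a_decreasing: "a (Suc j) \<le> a j" if "2 \<le> j" for j
  proof -
    have "r ^ Suc j * z \<le> r ^ 3 * z"
      using that r z by (intro mult_right_mono power_decreasing) auto
    then have "(r ^ Suc j * z) * a j \<le> 1 * a j"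
      using rz a_nonneg[of j] by (intro mult_right_mono) auto
    then show ?thesis
      unfolding a_def by (simp add: triangular_Suc power_add algebra_simps)
  qed
  have summable_a: "summable (\<lambda>j. (-1) ^ j * a j)"
    using summable_partial_theta[of r "- z"] r unfolding a_def by (simp add: power_minus' algebra_simps)
  have "partial_theta r (- z) = (\<Sum>j. (-1) ^ j * a j)"
    unfolding partial_theta_def a_def by (simp add: power_minus' algebra_simps)
  also have "\<dots> = (\<Sum>i. (-1) ^ i * a (i + 2)) + (a 0 - a 1)"
    using suminf_split_initial_segment[OF summable_a, of 2] by (simp add: numeral_2_eq_2)
  finally have split: "partial_theta r (- z) = (\<Sum>i. (-1) ^ i * a (i + 2)) + (a 0 - a 1)" .
  have "a \<longlonglongrightarrow> 0"
    unfolding a_def using summable_LIMSEQ_zero[OF summable_partial_theta[of r z]] r by simp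
  then have "(\<lambda>i. a (i + 2)) \<longlonglongrightarrow> 0"
    by (rule LIMSEQ_ignore_initial_segment)
  then have "(\<Sum>i<2 * 1. (-1) ^ i * a (i + 2)) \<le> (\<Sum>i. (-1) ^ i * a (i + 2))"
    by (rule summable_Leibniz'(2)) (auto simp: a_nonneg a_decreasing)
  moreover have "triangular 1 = 1" "triangular 2 = 3" "triangular 3 = 6"
    by (simp_all add: triangular_def)
  then have "cubic_minorant r (r * z) = a 0 - a 1 + (a 2 - a 3)"
    by (simp add: a_def cubic_minorant_def power_mult_distrib eval_nat_numeral)
  ultimately show ?thesis
    using split by (simp add: eval_nat_numeral)
qed

lemma cubic_minorant_eq: "cubic_minorant r u = 1 - u + r * u ^ 2 * (1 - r ^ 2 * u)"
  by (simp add: cubic_minorant_def algebra_simps power2_eq_square power3_eq_cube)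

lemma cubic_minorant_ge_one_minus:
  assumes "0 \<le> r" "r \<le> 1" "0 \<le> u" "u \<le> 1"
  shows "1 - u \<le> cubic_minorant r u"
proof -
  have "r ^ 2 * u \<le> 1"
    using assms by (intro mult_le_one) (auto intro: power_le_one)
  then show ?thesis
    using assms by (simp add: cubic_minorant_eq)
qed

lemma cubic_minorant_pos:
  assumes "0 < r" "r < 1" "0 < u" "u \<le> 1"
  shows "0 < cubic_minorant r u"
proof -
  have "r ^ 2 * u \<le> r ^ 2 * 1"
    using assms by (intro mult_left_mono) auto
  moreover have "r ^ 2 < 1"
    using assms by (simp add: power_less_one_iff)
  ultimately have "0 < 1 - r ^ 2 * u"
    by linarith
  then have "0 < r * u ^ 2 * (1 - r ^ 2 * u)"
    using assms by simp
  then show ?thesis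
    using assms by (simp add: cubic_minorant_eq)
qed

lemma partial_theta_neg_pos_mult_le_1:
  assumes r: "0 < r" "r < 1" and z: "0 \<le> z" and rz: "r * z \<le> 1"
  shows "0 < partial_theta r (- z)"
proof (cases "z = 0")
  case False
  have "r ^ 3 * z = r ^ 2 * (r * z)"
    by (simp add: power3_eq_cube power2_eq_square)
  also have "\<dots> \<le> 1"
    by (rule mult_le_one) (use r rz z in \<open>auto intro: power_le_one\<close>)
  finally have "cubic_minorant r (r * z) \<le> partial_theta r (- z)"
    by (intro cubic_minorant_le_partial_theta r z)
  moreover have "0 < cubic_minorant r (r * z)"
    using r z rz False by (intro cubic_minorant_pos) auto
  ultimately show ?thesis
    by linarith
qed simp

section \<open>q-Pochhammer symbols and Gaussian binomial coefficients\<close>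

definition qpoch :: "real \<Rightarrow> nat \<Rightarrow> real" where
  "qpoch r n = (\<Prod>k=1..n. 1 - r ^ k)"

lemma qpoch_0 [simp]: "qpoch r 0 = 1"
  by (simp add: qpoch_def)

lemma qpoch_Suc: "qpoch r (Suc n) = qpoch r n * (1 - r ^ Suc n)"
  by (simp add: qpoch_def prod.nat_ivl_Suc')

lemma qpoch_add: "qpoch r (m + j) = qpoch r m * (\<Prod>i=1..j. 1 - r ^ (m + i))"
  by (induction j) (simp_all add: qpoch_Suc prod.nat_ivl_Suc')

lemma qpoch_pos:
  assumes "0 < r" "r < 1"
  shows "0 < qpoch r n"
  unfolding qpoch_def using assms by (intro prod_pos) (auto simp: power_less_one_iff)

lemma qpoch_antimono:
  assumes "0 \<le> a" "a \<le> r" "r \<le> 1"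
  shows "qpoch r n \<le> qpoch a n"
  unfolding qpoch_def
proof (rule prod_mono)
  fix k assume "k \<in> {1..n}"
  have "a ^ k \<le> r ^ k" "r ^ k \<le> 1"
    using assms by (auto intro: power_mono power_le_one)
  then show "0 \<le> 1 - r ^ k \<and> 1 - r ^ k \<le> 1 - a ^ k"
    by simp
qed

definition qbinom :: "real \<Rightarrow> nat \<Rightarrow> nat \<Rightarrow> real" where
  "qbinom r m i = (if i \<le> m then qpoch r m / (qpoch r i * qpoch r (m - i)) else 0)"

lemma qbinom_0 [simp]:
  assumes "0 < r" "r < 1"
  shows "qbinom r m 0 = 1"
  using qpoch_pos[OF assms, of m] by (simp add: qbinom_def)

lemma qbinom_symmetric:
  assumes "i \<le> m"
  shows "qbinom r m (m - i) = qbinom r m i"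
  using assms by (simp add: qbinom_def mult.commute)

lemma qbinom_Suc_Suc:
  assumes r: "0 < r" "r < 1" and i: "i \<le> m"
  shows "qbinom r (Suc m) (Suc i) = qbinom r m (Suc i) + r ^ (m - i) * qbinom r m i"
proof (cases "i = m")
  case True
  then show ?thesis
    using qpoch_pos[OF r, of m] qpoch_pos[OF r, of "Suc m"] by (simp add: qbinom_def)
next
  case False
  then obtain d where m: "m = i + 1 + d"
    using i by (metis add.commute add_Suc le_neq_implies_less less_iff_Suc_add plus_1_eq_Suc)
  define A B where "A = r ^ Suc i" and "B = r ^ Suc d"
  have pos: "0 < qpoch r i" "0 < qpoch r d" "0 < qpoch r m"
    using qpoch_pos[OF r] by auto
  have "1 - A \<noteq> 0" "1 - B \<noteq> 0"
    unfolding A_def B_def using power_Suc_less_one[OF r] by (metis less_irrefl right_minus_eq)+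
  then have "qpoch r m * (1 - A * B) / (qpoch r i * (1 - A) * (qpoch r d * (1 - B)))
      = qpoch r m / (qpoch r i * (1 - A) * qpoch r d) + B * (qpoch r m / (qpoch r i * (qpoch r d * (1 - B))))"
    using pos by (simp add: divide_simps) (simp add: algebra_simps)
  moreover have "qpoch r (Suc m) = qpoch r m * (1 - A * B)"
    by (simp add: qpoch_Suc m A_def B_def power_add[symmetric])
  moreover have "qpoch r (Suc i) = qpoch r i * (1 - A)" "qpoch r (Suc d) = qpoch r d * (1 - B)"
    by (simp_all add: qpoch_Suc A_def B_def)
  moreover have "Suc m - Suc i = Suc d" "m - Suc i = d" "m - i = Suc d"
    by (simp_all add: m)
  ultimately show ?thesis
    using i False by (simp add: qbinom_def B_def mult.assoc)
qed

lemma q_binomial: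
  assumes r: "0 < r" "r < 1"
  shows "(\<Prod>k<m. 1 + y * r ^ k) = (\<Sum>i\<le>m. qbinom r m i * r ^ triangular (i - 1) * y ^ i)"
proof (induction m)
  case 0
  then show ?case using r by simp
next
  case (Suc m)
  define S where "S m = (\<Sum>i\<le>m. qbinom r m i * r ^ triangular (i - 1) * y ^ i)" for m
  have "qbinom r m (Suc m) = 0"
    by (simp add: qbinom_def)
  then have shift: "S m = 1 + (\<Sum>i\<le>m. qbinom r m (Suc i) * r ^ triangular i * y ^ Suc i)"
    using r sum.atMost_Suc_shift[of "\<lambda>i. qbinom r m i * r ^ triangular (i - 1) * y ^ i" m]
    by (simp add: S_def)
  have yS: "y * r ^ m * S m = (\<Sum>i\<le>m. r ^ (m - i) * qbinom r m i * r ^ triangular i * y ^ Suc i)"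
    unfolding S_def sum_distrib_left
  proof (rule sum.cong)
    fix i assume "i \<in> {..m}"
    then have "r ^ m = r ^ (m - i) * r ^ i"
      by (simp add: power_add[symmetric])
    moreover have "r ^ triangular i = r ^ triangular (i - 1) * r ^ i"
      by (simp flip: power_add triangular_diff_one_add[of i])
    ultimately show "y * r ^ m * (qbinom r m i * r ^ triangular (i - 1) * y ^ i)
        = r ^ (m - i) * qbinom r m i * r ^ triangular i * y ^ Suc i"
      by (simp add: algebra_simps)
  qed simp
  have "(\<Prod>k<Suc m. 1 + y * r ^ k) = S m * (1 + y * r ^ m)"
    using Suc by (simp add: S_def)
  also have "\<dots> = S m + y * r ^ m * S m"
    by (simp add: algebra_simps)
  also have "\<dots> = 1 + (\<Sum>i\<le>m. (qbinom r m (Suc i) + r ^ (m - i) * qbinom r m i) * r ^ triangular i * y ^ Suc i)"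
    unfolding yS by (subst shift) (simp add: sum.distrib algebra_simps)
  also have "\<dots> = 1 + (\<Sum>i\<le>m. qbinom r (Suc m) (Suc i) * r ^ triangular i * y ^ Suc i)"
    using qbinom_Suc_Suc[OF r] by (intro arg_cong2[where f = "(+)"] sum.cong) auto
  also have "\<dots> = S (Suc m)"
    using r sum.atMost_Suc_shift[of "\<lambda>i. qbinom r (Suc m) i * r ^ triangular (i - 1) * y ^ i" m]
    by (simp add: S_def del: sum.atMost_Suc)
  finally show ?case
    by (simp add: S_def)
qed

definition qpoch_inf :: "real \<Rightarrow> real" where
  "qpoch_inf r = (\<Prod>k. 1 - r ^ Suc k)"

lemma qpoch_Suc_eq_prod_atMost: "qpoch r (Suc n) = (\<Prod>k\<le>n. 1 - r ^ Suc k)"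
  by (induction n) (simp_all add: qpoch_Suc)

lemma has_prod_qpoch_inf:
  assumes "0 < r" "r < 1"
  shows "(\<lambda>k. 1 - r ^ Suc k) has_prod qpoch_inf r"
proof -
  have "summable (\<lambda>k. \<bar>- (r ^ Suc k)\<bar>)"
    using assms by simp
  moreover have "- (r ^ Suc k) \<noteq> - 1" for k
    using power_Suc_less_one[OF assms, of k] by simp
  ultimately have "convergent_prod (\<lambda>k. 1 + - (r ^ Suc k))"
    by (rule summable_imp_convergent_prod_real)
  then show ?thesis
    unfolding qpoch_inf_def by auto
qed

lemma qpoch_tendsto_qpoch_inf:
  assumes "0 < r" "r < 1"
  shows "qpoch r \<longlonglongrightarrow> qpoch_inf r"
proof (rule LIMSEQ_imp_Suc)
  show "(\<lambda>n. qpoch r (Suc n)) \<longlonglongrightarrow> qpoch_inf r"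
    using has_prod_imp_tendsto[OF has_prod_qpoch_inf[OF assms]] by (simp add: qpoch_Suc_eq_prod_atMost)
qed

lemma qpoch_inf_pos:
  assumes "0 < r" "r < 1"
  shows "0 < qpoch_inf r"
  using has_prod_pos[OF has_prod_qpoch_inf[OF assms]] power_Suc_less_one[OF assms] by simp

lemma qpoch_inf_le_qpoch:
  assumes "0 < r" "r < 1"
  shows "qpoch_inf r \<le> qpoch r n"
proof (rule decseq_ge[OF _ qpoch_tendsto_qpoch_inf[OF assms]])
  show "decseq (qpoch r)"
    unfolding decseq_Suc_iff using qpoch_pos[OF assms] assms by (simp add: qpoch_Suc mult_left_le)
qed

section \<open>Jacobi's triple product and the bilateral theta function\<close>

lemma finite_triple_product_rescaled:
  fixes r x :: real and n :: nat
  assumes r: "0 < r" and x: "x \<noteq> 0"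
  defines "y \<equiv> 1 / (r ^ n * x)"
  shows "(\<Prod>k=1..n. (1 + x * r ^ k) * (1 + r ^ (k - 1) / x))
    = x ^ n * r ^ triangular n * (\<Prod>i<2 * n. 1 + y * r ^ i)"
proof -
  have "(\<Prod>k=1..n. 1 + x * r ^ k) = (\<Prod>k=1..n. x * r ^ k * (1 + y * r ^ (n - k)))"
  proof (rule prod.cong)
    fix k assume "k \<in> {1..n}"
    then have "r ^ n = r ^ k * r ^ (n - k)"
      by (simp add: power_add[symmetric])
    then show "1 + x * r ^ k = x * r ^ k * (1 + y * r ^ (n - k))"
      using r x unfolding y_def by (simp add: field_simps)
  qed simp
  also have "\<dots> = (\<Prod>k=1..n. x * r ^ k) * (\<Prod>k=1..n. 1 + y * r ^ (n - k))"
    by (rule prod.distrib)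
  also have "(\<Prod>k=1..n. x * r ^ k) = x ^ n * r ^ triangular n"
    by (induction n) (simp_all add: prod.nat_ivl_Suc' triangular_Suc power_add algebra_simps)
  also have "(\<Prod>k=1..n. 1 + y * r ^ (n - k)) = (\<Prod>i<n. 1 + y * r ^ i)"
    by (rule prod.reindex_bij_witness[where i = "\<lambda>i. n - i" and j = "\<lambda>k. n - k"]) auto
  finally have low: "(\<Prod>k=1..n. 1 + x * r ^ k) = x ^ n * r ^ triangular n * (\<Prod>i<n. 1 + y * r ^ i)" .
  have "(\<Prod>k=1..n. 1 + r ^ (k - 1) / x) = (\<Prod>i\<in>{n..<2 * n}. 1 + r ^ (i - n) / x)"
    by (rule prod.reindex_bij_witness[where i = "\<lambda>i. i + 1 - n" and j = "\<lambda>k. k - 1 + n"]) auto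
  also have "\<dots> = (\<Prod>i\<in>{n..<2 * n}. 1 + y * r ^ i)"
  proof (rule prod.cong)
    fix i assume "i \<in> {n..<2 * n}"
    then have "r ^ i = r ^ n * r ^ (i - n)"
      by (simp add: power_add[symmetric])
    then show "1 + r ^ (i - n) / x = 1 + y * r ^ i"
      using r x unfolding y_def by (simp add: field_simps)
  qed simp
  finally have high: "(\<Prod>k=1..n. 1 + r ^ (k - 1) / x) = (\<Prod>i\<in>{n..<2 * n}. 1 + y * r ^ i)" .
  have "(\<Prod>i<2 * n. 1 + y * r ^ i) = (\<Prod>i<n. 1 + y * r ^ i) * (\<Prod>i\<in>{n..<2 * n}. 1 + y * r ^ i)"
    using prod.atLeastLessThan_concat[of 0 n "2 * n" "\<lambda>i. 1 + y * r ^ i"] by (simp add: atLeast0LessThan)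
  then show ?thesis
    unfolding prod.distrib low high by (simp only: mult.assoc)
qed

lemma rescaled_triple_product_term_le:
  fixes r x :: real
  assumes "0 < r" "x \<noteq> 0" "i \<le> n"
  shows "x ^ n * r ^ triangular n * (r ^ triangular (i - 1) * (1 / (r ^ n * x)) ^ i)
    = r ^ triangular (n - i) * x ^ (n - i)"
proof -
  obtain j where n: "n = j + i"
    using assms(3) by (metis le_add_diff_inverse2)
  have "triangular (j + i) + triangular (i - 1) = (j + i) * i + triangular j"
    using triangular_diff_one_add[of i] two_triangular[of i] triangular_add[of j i]
    by (simp add: algebra_simps)
  then have "r ^ triangular n * r ^ triangular (i - 1) = (r ^ n) ^ i * r ^ triangular j"
    by (simp add: n power_add[symmetric] power_mult[symmetric])
  moreover have "x ^ n * (1 / (r ^ n * x)) ^ i = x ^ j / (r ^ n) ^ i"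
    using assms by (simp add: n power_add power_mult_distrib power_divide)
  ultimately show ?thesis
    using assms by (simp add: n field_simps)
qed

lemma rescaled_triple_product_term_gt:
  fixes r x :: real
  assumes "0 < r" "x \<noteq> 0"
  shows "x ^ n * r ^ triangular n * (r ^ triangular (n + k) * (1 / (r ^ n * x)) ^ (n + 1 + k))
    = r ^ triangular k * (1 / x) ^ Suc k"
proof -
  have "triangular (n + k) + triangular n = n * (n + 1 + k) + triangular k"
    using two_triangular[of n] by (simp add: triangular_add algebra_simps)
  then have "r ^ triangular (n + k) * r ^ triangular n = (r ^ n) ^ (n + 1 + k) * r ^ triangular k"
    by (simp add: power_add[symmetric] power_mult[symmetric])
  moreover have "x ^ n * (1 / (r ^ n * x)) ^ (n + 1 + k) = (1 / x) ^ Suc k / (r ^ n) ^ (n + 1 + k)"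
    using assms by (simp add: power_add power_mult_distrib power_divide)
  ultimately show ?thesis
    using assms by (simp add: field_simps)
qed

lemma finite_triple_product:
  fixes r x :: real
  assumes r: "0 < r" "r < 1" and x: "x \<noteq> 0"
  shows "(\<Prod>k=1..n. (1 + x * r ^ k) * (1 + r ^ (k - 1) / x))
     = (\<Sum>j\<le>n. qbinom r (2 * n) (n + j) * r ^ triangular j * x ^ j)
     + (\<Sum>k<n. qbinom r (2 * n) (n + 1 + k) * r ^ triangular k * (1 / x) ^ Suc k)"
proof -
  define y where "y = 1 / (r ^ n * x)"
  define g where "g i = x ^ n * r ^ triangular n * (qbinom r (2 * n) i * r ^ triangular (i - 1) * y ^ i)" for i
  have g: "g i = qbinom r (2 * n) i * (x ^ n * r ^ triangular n * (r ^ triangular (i - 1) * y ^ i))" for i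
    by (simp add: g_def algebra_simps)
  have "(\<Prod>k=1..n. (1 + x * r ^ k) * (1 + r ^ (k - 1) / x)) = (\<Sum>i\<le>2 * n. g i)"
    unfolding finite_triple_product_rescaled[OF r(1) x, folded y_def] q_binomial[OF r] g_def
    by (simp add: sum_distrib_left y_def)
  also have "\<dots> = (\<Sum>i\<le>n. g i) + (\<Sum>i\<in>{n + 1..2 * n}. g i)"
    using sum.atLeastLessThan_concat[of 0 "n + 1" "2 * n + 1" g]
    by (simp add: atLeast0LessThan atLeast0AtMost atLeastLessThanSuc_atLeastAtMost lessThan_Suc_atMost)
  also have "(\<Sum>i\<le>n. g i) = (\<Sum>j\<le>n. g (n - j))"
    by (rule sum.reindex_bij_witness[where i = "\<lambda>i. n - i" and j = "\<lambda>k. n - k"]) auto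
  also have "\<dots> = (\<Sum>j\<le>n. qbinom r (2 * n) (n + j) * r ^ triangular j * x ^ j)"
  proof (rule sum.cong)
    fix j assume "j \<in> {..n}"
    then have "2 * n - (n + j) = n - j" "n - (n - j) = j"
      by auto
    then show "g (n - j) = qbinom r (2 * n) (n + j) * r ^ triangular j * x ^ j"
      using rescaled_triple_product_term_le[OF r(1) x, of "n - j" n] qbinom_symmetric[of "n + j" "2 * n" r]
      by (simp add: g y_def)
  qed simp
  also have "(\<Sum>i\<in>{n + 1..2 * n}. g i) = (\<Sum>k<n. g (n + 1 + k))"
    by (rule sum.reindex_bij_witness[where j = "\<lambda>i. i - (n + 1)" and i = "\<lambda>k. n + 1 + k"]) auto
  also have "\<dots> = (\<Sum>k<n. qbinom r (2 * n) (n + 1 + k) * r ^ triangular k * (1 / x) ^ Suc k)"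
    using rescaled_triple_product_term_gt[OF r(1) x] by (simp add: g y_def mult.assoc)
  finally show ?thesis .
qed

definition triple_product_weight :: "real \<Rightarrow> nat \<Rightarrow> nat \<Rightarrow> real" where
  "triple_product_weight r n j = qpoch r n ^ 2 / (qpoch r (n + j) * qpoch r (n - j))"

lemma qbinom_central_eq:
  assumes r: "0 < r" "r < 1" and j: "j \<le> n"
  shows "qpoch r n ^ 2 / qpoch r (2 * n) * qbinom r (2 * n) (n + j) = triple_product_weight r n j"
proof -
  have "2 * n - (n + j) = n - j"
    by simp
  moreover have "qpoch r k \<noteq> 0" for k
    using qpoch_pos[OF r, of k] by simp
  ultimately show ?thesis
    using j unfolding qbinom_def triple_product_weight_def by (simp add: field_simps)
qed

lemma prod_one_minus_power_bounds:
  fixes r :: real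
  assumes "0 < r" "r < 1"
  shows "(1 - r) ^ j \<le> (\<Prod>i=1..j. 1 - r ^ (m + i))" "(\<Prod>i=1..j. 1 - r ^ (m + i)) \<le> 1"
    and "0 < (\<Prod>i=1..j. 1 - r ^ (m + i))"
proof -
  have "(\<Prod>i=1..j. 1 - r) \<le> (\<Prod>i=1..j. 1 - r ^ (m + i))"
  proof (rule prod_mono)
    fix i assume "i \<in> {1..j}"
    then have "r ^ (m + i) \<le> r ^ 1"
      using assms by (intro power_decreasing) auto
    then show "0 \<le> 1 - r \<and> 1 - r \<le> 1 - r ^ (m + i)"
      using assms by simp
  qed
  then show "(1 - r) ^ j \<le> (\<Prod>i=1..j. 1 - r ^ (m + i))"
    by simp
  moreover have "0 < (1 - r) ^ j"
    using assms by simp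
  ultimately show "0 < (\<Prod>i=1..j. 1 - r ^ (m + i))"
    by linarith
  show "(\<Prod>i=1..j. 1 - r ^ (m + i)) \<le> 1"
    using assms by (intro prod_le_1) (auto intro!: power_le_one)
qed

lemma triple_product_weight_bounds:
  assumes r: "0 < r" "r < 1" and j: "j \<le> n"
  shows "0 \<le> triple_product_weight r n j" "triple_product_weight r n j \<le> (1 / (1 - r)) ^ j"
proof -
  obtain d where n: "n = d + j"
    using j by (metis le_add_diff_inverse2)
  define P Q where "P = (\<Prod>i=1..j. 1 - r ^ (n + i))" and "Q = (\<Prod>i=1..j. 1 - r ^ (d + i))"
  have P: "(1 - r) ^ j \<le> P" "0 < P"
    unfolding P_def using prod_one_minus_power_bounds[OF r] by auto
  have Q: "0 < Q" "Q \<le> 1"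
    unfolding Q_def using prod_one_minus_power_bounds[OF r] by auto
  have "qpoch r (n + j) = qpoch r n * P" "qpoch r n = qpoch r d * Q"
    unfolding P_def Q_def n by (rule qpoch_add)+
  then have weight: "triple_product_weight r n j = Q / P"
    unfolding triple_product_weight_def using qpoch_pos[OF r, of d] P Q
    by (simp add: n power2_eq_square field_simps)
  then show "0 \<le> triple_product_weight r n j"
    using P Q by simp
  have "Q / P \<le> 1 / (1 - r) ^ j"
    using P Q r by (intro frac_le) auto
  then show "triple_product_weight r n j \<le> (1 / (1 - r)) ^ j"
    by (simp add: weight power_one_over)
qed

lemma triple_product_weight_tendsto:
  assumes r: "0 < r" "r < 1"
  shows "(\<lambda>n. triple_product_weight r n j) \<longlonglongrightarrow> 1"
proof (rule LIMSEQ_offset[where k = j])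
  define h where "h n = (\<Prod>i=1..j. 1 - r ^ (n + i))" for n
  have h_tendsto: "(\<lambda>n. h (n + m)) \<longlonglongrightarrow> 1" for m
  proof -
    have "(\<lambda>n. r ^ n * r ^ (m + i)) \<longlonglongrightarrow> 0 * r ^ (m + i)" for i
      using r by (intro tendsto_mult LIMSEQ_power_zero tendsto_const) auto
    then have "(\<lambda>n. \<Prod>i=1..j. 1 - r ^ (n + m + i)) \<longlonglongrightarrow> (\<Prod>i=1..j. 1 - 0)"
      by (intro tendsto_prod tendsto_diff tendsto_const) (simp add: power_add mult.assoc)
    then show ?thesis
      unfolding h_def by simp
  qed
  have h_pos: "0 < h n" for n
    unfolding h_def using prod_one_minus_power_bounds(3)[OF r] .
  have "triple_product_weight r (n + j) j = h n / h (n + j)" for n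
  proof -
    have "qpoch r (n + j) = qpoch r n * h n" "qpoch r (n + j + j) = qpoch r (n + j) * h (n + j)"
      unfolding h_def by (rule qpoch_add)+
    then show ?thesis
      unfolding triple_product_weight_def using qpoch_pos[OF r, of n] h_pos[of n] h_pos[of "n + j"]
      by (simp add: power2_eq_square field_simps)
  qed
  moreover have "(\<lambda>n. h (n + 0) / h (n + j)) \<longlonglongrightarrow> 1 / 1"
    by (intro tendsto_divide h_tendsto) auto
  ultimately show "(\<lambda>n. triple_product_weight r (n + j) j) \<longlonglongrightarrow> 1"
    by simp
qed

lemma tendsto_weighted_partial_sums:
  fixes a M :: "nat \<Rightarrow> real" and w :: "nat \<Rightarrow> nat \<Rightarrow> real"
  assumes lim: "\<And>j. (\<lambda>n. w n j) \<longlonglongrightarrow> 1"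
    and bound: "\<And>n j. j \<le> n \<Longrightarrow> \<bar>w n j\<bar> \<le> M j"
    and summable: "summable (\<lambda>j. M j * \<bar>a j\<bar>)"
  shows "(\<lambda>n. \<Sum>j\<le>n. w n j * a j) \<longlonglongrightarrow> suminf a"
proof -
  define b where "b j n = (if j \<le> n then w n j else 0) * a j" for j n
  have b_tendsto: "(\<lambda>n. b j n) \<longlonglongrightarrow> a j" for j
  proof -
    have "(\<lambda>n. w n j * a j) \<longlonglongrightarrow> 1 * a j"
      by (intro tendsto_mult lim tendsto_const)
    moreover have "eventually (\<lambda>n. w n j * a j = b j n) sequentially"
      using eventually_ge_at_top[of j] by eventually_elim (simp add: b_def)
    ultimately show ?thesis
      using tendsto_cong by force
  qed
  have "norm (b j n) \<le> M j * \<bar>a j\<bar>" for j n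
  proof (cases "j \<le> n")
    case True
    then show ?thesis
      using bound[OF True] by (simp add: b_def abs_mult mult_right_mono)
  next
    case False
    have "\<bar>w j j\<bar> \<le> M j"
      by (rule bound) simp
    then have "0 \<le> M j"
      using abs_ge_zero order_trans by blast
    with False show ?thesis
      by (simp add: b_def)
  qed
  then have "eventually (\<lambda>(j, n). norm (b j n) \<le> M j * \<bar>a j\<bar>) (at_top \<times>\<^sub>F sequentially)"
    by (intro always_eventually) auto
  then have "(\<lambda>n. \<Sum>j. b j n) \<longlonglongrightarrow> suminf a"
    using tannerys_theorem[OF b_tendsto _ summable] by simp
  moreover have "(\<Sum>j. b j n) = (\<Sum>j\<le>n. w n j * a j)" for n
    by (subst suminf_finite[of "{..n}"]) (auto simp: b_def)
  ultimately show ?thesis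
    by simp
qed

lemma normalized_finite_triple_product:
  fixes r x :: real
  assumes r: "0 < r" "r < 1" and x: "x \<noteq> 0"
  shows "qpoch r n ^ 2 / qpoch r (2 * n) * (\<Prod>k=1..n. (1 + x * r ^ k) * (1 + r ^ (k - 1) / x))
    = (\<Sum>j\<le>n. triple_product_weight r n j * (r ^ triangular j * x ^ j))
    + (\<Sum>k<n. triple_product_weight r n (Suc k) * (r ^ triangular k * (1 / x) ^ Suc k))"
proof -
  let ?c = "qpoch r n ^ 2 / qpoch r (2 * n)"
  have "?c * (\<Prod>k=1..n. (1 + x * r ^ k) * (1 + r ^ (k - 1) / x))
    = (\<Sum>j\<le>n. ?c * qbinom r (2 * n) (n + j) * (r ^ triangular j * x ^ j))
    + (\<Sum>k<n. ?c * qbinom r (2 * n) (n + 1 + k) * (r ^ triangular k * (1 / x) ^ Suc k))"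
    unfolding finite_triple_product[OF r x] by (simp add: distrib_left sum_distrib_left mult.assoc)
  also have "\<dots> = (\<Sum>j\<le>n. triple_product_weight r n j * (r ^ triangular j * x ^ j))
    + (\<Sum>k<n. triple_product_weight r n (Suc k) * (r ^ triangular k * (1 / x) ^ Suc k))"
    by (intro arg_cong2[where f = "(+)"] sum.cong refl) (simp_all add: qbinom_central_eq[OF r, symmetric])
  finally show ?thesis .
qed

lemma weighted_partial_theta_tendsto:
  assumes r: "0 < r" "r < 1"
  shows "(\<lambda>n. \<Sum>j\<le>n. triple_product_weight r n j * (r ^ triangular j * x ^ j)) \<longlonglongrightarrow> partial_theta r x"
  unfolding partial_theta_def
proof (rule tendsto_weighted_partial_sums)
  show "(\<lambda>n. triple_product_weight r n j) \<longlonglongrightarrow> 1" for j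
    by (rule triple_product_weight_tendsto[OF r])
  show "\<bar>triple_product_weight r n j\<bar> \<le> (1 / (1 - r)) ^ j" if "j \<le> n" for n j
    using triple_product_weight_bounds[OF r that] by simp
  have "(1 / (1 - r)) ^ j * \<bar>r ^ triangular j * x ^ j\<bar> = r ^ triangular j * (\<bar>x\<bar> / (1 - r)) ^ j" for j
    using r by (simp add: abs_mult power_abs power_divide)
  then show "summable (\<lambda>j. (1 / (1 - r)) ^ j * \<bar>r ^ triangular j * x ^ j\<bar>)"
    using summable_partial_theta r by simp
qed

lemma weighted_partial_theta_shifted_tendsto:
  assumes r: "0 < r" "r < 1"
  shows "(\<lambda>n. \<Sum>k<n. triple_product_weight r n (Suc k) * (r ^ triangular k * y ^ Suc k))
    \<longlonglongrightarrow> y * partial_theta r y"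
proof (rule LIMSEQ_imp_Suc)
  have "(\<lambda>n. \<Sum>k\<le>n. triple_product_weight r (Suc n) (Suc k) * (r ^ triangular k * y ^ Suc k))
    \<longlonglongrightarrow> (\<Sum>k. r ^ triangular k * y ^ Suc k)"
  proof (rule tendsto_weighted_partial_sums)
    show "(\<lambda>n. triple_product_weight r (Suc n) (Suc k)) \<longlonglongrightarrow> 1" for k
      by (rule LIMSEQ_Suc[OF triple_product_weight_tendsto[OF r]])
    show "\<bar>triple_product_weight r (Suc n) (Suc k)\<bar> \<le> (1 / (1 - r)) ^ Suc k" if "k \<le> n" for n k
      using triple_product_weight_bounds[OF r, of "Suc k" "Suc n"] that by simp
    have "(1 / (1 - r)) ^ Suc k * \<bar>r ^ triangular k * y ^ Suc k\<bar>
        = \<bar>y\<bar> / (1 - r) * (r ^ triangular k * (\<bar>y\<bar> / (1 - r)) ^ k)" for k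
      using r by (simp add: abs_mult power_abs power_divide)
    then show "summable (\<lambda>k. (1 / (1 - r)) ^ Suc k * \<bar>r ^ triangular k * y ^ Suc k\<bar>)"
      using summable_mult[OF summable_partial_theta] r by simp
  qed
  moreover have "(\<Sum>k. r ^ triangular k * y ^ Suc k) = y * partial_theta r y"
    using suminf_mult[OF summable_partial_theta[of r y], of y] r
    unfolding partial_theta_def by (simp add: algebra_simps)
  ultimately show "(\<lambda>n. \<Sum>k<Suc n. triple_product_weight r (Suc n) (Suc k) * (r ^ triangular k * y ^ Suc k))
    \<longlonglongrightarrow> y * partial_theta r y"
    by (simp only: lessThan_Suc_atMost)
qed

text \<open>The bilateral series of r^(n(n+1)/2) x^n over all integers n: its terms with
  n = -k-1 are (1/x) r^(k(k+1)/2) (1/x)^k.\<close>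
definition bilateral_theta :: "real \<Rightarrow> real \<Rightarrow> real" where
  "bilateral_theta r x = partial_theta r x + partial_theta r (1 / x) / x"

lemma triple_product_tendsto:
  fixes r x :: real
  assumes r: "0 < r" "r < 1" and x: "x \<noteq> 0"
  shows "(\<lambda>n. qpoch r n ^ 2 / qpoch r (2 * n) * (\<Prod>k=1..n. (1 + x * r ^ k) * (1 + r ^ (k - 1) / x)))
    \<longlonglongrightarrow> bilateral_theta r x"
  unfolding normalized_finite_triple_product[OF r x] bilateral_theta_def
  using weighted_partial_theta_shifted_tendsto[OF r, of "1 / x"]
  by (intro tendsto_add weighted_partial_theta_tendsto[OF r]) (simp add: mult.commute)

lemma triple_product_factor_bounds:
  fixes r w :: real
  assumes r: "0 < r" "r < 1" and w: "1 \<le> w" "w \<le> 1 / r" and k: "1 \<le> k"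
  shows "0 \<le> (1 + (- w) * r ^ k) * (1 + r ^ (k - 1) / (- w))"
    and "(1 + (- w) * r ^ k) * (1 + r ^ (k - 1) / (- w)) \<le> (1 - r ^ k) ^ 2"
proof -
  have rk: "r ^ k = r * r ^ (k - 1)" "r ^ (k - 1) \<le> 1"
    using k r by (simp_all add: power_le_one flip: power_Suc)
  have "w * r \<le> 1"
    using w r by (simp add: field_simps)
  then have "w * r * r ^ (k - 1) \<le> 1"
    using rk(2) r by (intro mult_le_one[of "w * r"]) auto
  then have "w * r ^ k \<le> 1"
    using rk by (simp add: mult.assoc)
  moreover have "r ^ k \<le> w * r ^ k"
    using w r by simp
  moreover have "r ^ (k - 1) / w \<le> 1"
    using w rk by (simp add: divide_le_eq_1 order.trans)
  moreover have "r ^ k \<le> r ^ (k - 1) / w"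
    using w r rk by (simp add: field_simps)
  ultimately show "0 \<le> (1 + (- w) * r ^ k) * (1 + r ^ (k - 1) / (- w))"
    and "(1 + (- w) * r ^ k) * (1 + r ^ (k - 1) / (- w)) \<le> (1 - r ^ k) ^ 2"
    by (auto simp: power2_eq_square intro!: mult_mono)
qed

lemma bilateral_theta_neg_bounds:
  assumes r: "0 < r" "r < 1" and w: "1 \<le> w" "w \<le> 1 / r"
  shows "0 \<le> bilateral_theta r (- w)" "bilateral_theta r (- w) \<le> qpoch_inf r ^ 3"
proof -
  define P where "P n = (\<Prod>k=1..n. (1 + (- w) * r ^ k) * (1 + r ^ (k - 1) / (- w)))" for n
  define c where "c n = qpoch r n ^ 2 / qpoch r (2 * n)" for n
  have lim: "(\<lambda>n. c n * P n) \<longlonglongrightarrow> bilateral_theta r (- w)"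
    unfolding c_def P_def using triple_product_tendsto[OF r, of "- w"] w by simp
  have c: "0 \<le> c n" for n
    unfolding c_def using qpoch_pos[OF r] by (simp add: less_imp_le)
  have P: "0 \<le> P n" "P n \<le> qpoch r n ^ 2" for n
    unfolding P_def qpoch_def power2_eq_square prod.distrib[symmetric]
    using triple_product_factor_bounds[OF r w] by (auto simp: power2_eq_square intro!: prod_nonneg prod_mono)
  show "0 \<le> bilateral_theta r (- w)"
    using lim c P by (intro LIMSEQ_le_const[OF lim]) auto
  have "(\<lambda>n. qpoch r (2 * n)) \<longlonglongrightarrow> qpoch_inf r"
    using LIMSEQ_subseq_LIMSEQ[OF qpoch_tendsto_qpoch_inf[OF r], of "(*) 2"]
    by (simp add: strict_mono_def o_def)
  then have "(\<lambda>n. c n * qpoch r n ^ 2) \<longlonglongrightarrow> qpoch_inf r ^ 2 / qpoch_inf r * qpoch_inf r ^ 2"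
    unfolding c_def using qpoch_inf_pos[OF r]
    by (intro tendsto_intros qpoch_tendsto_qpoch_inf[OF r]) auto
  moreover have "qpoch_inf r ^ 2 / qpoch_inf r * qpoch_inf r ^ 2 = qpoch_inf r ^ 3"
    using qpoch_inf_pos[OF r] by (simp add: power2_eq_square power3_eq_cube)
  ultimately have "(\<lambda>n. c n * qpoch r n ^ 2) \<longlonglongrightarrow> qpoch_inf r ^ 3"
    by simp
  moreover have "c n * P n \<le> c n * qpoch r n ^ 2" for n
    by (intro mult_left_mono P c)
  ultimately show "bilateral_theta r (- w) \<le> qpoch_inf r ^ 3"
    by (intro LIMSEQ_le[OF lim]) auto
qed

lemma bilateral_theta_rec:
  assumes r: "0 < r" "r < 1" and x: "x \<noteq> 0"
  shows "bilateral_theta r x = r * x * bilateral_theta r (r * x)"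
proof -
  have r': "0 \<le> r" "r < 1"
    using r by simp_all
  have "r * (1 / (r * x)) = 1 / x"
    using r by simp
  then have "partial_theta r (1 / (r * x)) = 1 + 1 / x * partial_theta r (1 / x)"
    using partial_theta_rec[OF r', of "1 / (r * x)"] by simp
  with partial_theta_rec[OF r', of x] show ?thesis
    unfolding bilateral_theta_def using r x by (simp add: field_simps)
qed

lemma bilateral_theta_iterate:
  assumes r: "0 < r" "r < 1" and x: "x \<noteq> 0"
  shows "bilateral_theta r x = r ^ triangular n * x ^ n * bilateral_theta r (r ^ n * x)"
proof (induction n)
  case (Suc n)
  have "r ^ n * x \<noteq> 0"
    using r x by simp
  from bilateral_theta_rec[OF r this] Suc show ?case
    by (simp add: triangular_Suc power_add algebra_simps)
qed simp

lemma abs_bilateral_theta_neg_le: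
  assumes r: "0 < r" "r < 1" and z: "1 \<le> r ^ n * z" "r ^ n * z \<le> 1 / r"
  shows "\<bar>bilateral_theta r (- z)\<bar> \<le> r ^ triangular n * z ^ n * qpoch_inf r ^ 3"
proof -
  have "0 < r ^ n * z"
    using z(1) by linarith
  then have "0 < z"
    using r by (simp add: zero_less_mult_iff)
  have bounds: "0 \<le> bilateral_theta r (- (r ^ n * z))" "bilateral_theta r (- (r ^ n * z)) \<le> qpoch_inf r ^ 3"
    using bilateral_theta_neg_bounds[OF r z] by auto
  have "\<bar>bilateral_theta r (- z)\<bar> = r ^ triangular n * z ^ n * bilateral_theta r (- (r ^ n * z))"
    using bilateral_theta_iterate[OF r, of "- z" n] \<open>0 < z\<close> r bounds
    by (simp add: abs_mult power_abs)
  also have "\<dots> \<le> r ^ triangular n * z ^ n * qpoch_inf r ^ 3"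
    using bounds r \<open>0 < z\<close> by (intro mult_left_mono) auto
  finally show ?thesis .
qed

section \<open>Positivity of the partial theta function on [-4.84, 0]\<close>

lemma exists_power_bracket:
  fixes r z :: real
  assumes r: "0 < r" "r < 1" and z: "1 \<le> z"
  obtains n where "1 \<le> r ^ n * z" "r ^ Suc n * z < 1"
proof -
  have "(\<lambda>n. r ^ n * z) \<longlonglongrightarrow> 0 * z"
    by (intro tendsto_mult LIMSEQ_power_zero tendsto_const) (use r in auto)
  then have "eventually (\<lambda>n. r ^ n * z < 1) sequentially"
    by (intro order_tendstoD(2)) auto
  then have "\<exists>n. r ^ n * z < 1"
    by (auto simp: eventually_sequentially)
  then have "\<exists>n. \<not> r ^ n * z < 1 \<and> r ^ Suc n * z < 1"
    using z by (intro exists_least_lemma) auto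
  then show ?thesis
    using that by (auto simp: not_less)
qed

lemma partial_theta_neg_pos_by_bilateral:
  assumes r: "0 < r" "r < 1" and rz: "1 < r * z"
    and small: "\<And>n. 1 \<le> r ^ n * z \<Longrightarrow> r ^ Suc n * z < 1 \<Longrightarrow>
      r ^ triangular n * z ^ n * qpoch_inf r ^ 3 < (1 - r ^ 2) / z"
  shows "0 < partial_theta r (- z)"
proof -
  have "0 < r * z"
    using rz by linarith
  then have "r * z \<le> z"
    using r by (intro mult_left_le_one_le) (auto simp: zero_less_mult_iff)
  then have "1 < z"
    using rz by linarith
  then obtain n where n: "1 \<le> r ^ n * z" "r ^ Suc n * z < 1"
    using exists_power_bracket[OF r, of z] by auto
  then have "r ^ n * z \<le> 1 / r"
    using r by (simp add: field_simps)
  then have "\<bar>bilateral_theta r (- z)\<bar> < (1 - r ^ 2) / z"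
    using abs_bilateral_theta_neg_le[OF r n(1)] small[OF n] by linarith
  moreover have "(1 - r ^ 2) / z \<le> partial_theta r (- (1 / z)) / z"
  proof -
    have "1 / z \<le> r"
      using rz \<open>1 < z\<close> by (simp add: field_simps)
    then have "r * (1 / z) \<le> r * r"
      using r by (intro mult_left_mono) auto
    then have "1 - r ^ 2 \<le> 1 - r * (1 / z)"
      by (simp add: power2_eq_square)
    also have "\<dots> \<le> cubic_minorant r (r * (1 / z))"
      using r \<open>1 < z\<close> by (intro cubic_minorant_ge_one_minus) (auto simp: field_simps)
    also have "\<dots> \<le> partial_theta r (- (1 / z))"
      using r \<open>1 < z\<close> power_le_one[of r 3]
      by (intro cubic_minorant_le_partial_theta) (auto simp: field_simps)
    finally show ?thesis
      using \<open>1 < z\<close> by (intro divide_right_mono) auto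
  qed
  moreover have "partial_theta r (- z) = bilateral_theta r (- z) + partial_theta r (- (1 / z)) / z"
    unfolding bilateral_theta_def by simp
  ultimately show ?thesis
    by linarith
qed

text \<open>The four conditions say that the Bernstein coefficients of the cubic
  s \<mapsto> cubic_minorant c (1 + s (h - 1)) on [0, 1] are positive.\<close>
definition minorant_certificate :: "real \<Rightarrow> real \<Rightarrow> bool" where
  "minorant_certificate c h \<longleftrightarrow> 1 < h \<and>
    (let L = h - 1; q0 = c - c ^ 3; q1 = - L + 2 * c * L - 3 * c ^ 3 * L;
         q2 = c * L ^ 2 - 3 * c ^ 3 * L ^ 2; q3 = - (c ^ 3 * L ^ 3)
     in 0 < q0 \<and> 0 < q0 + q1 / 3 \<and> 0 < q0 + 2 * q1 / 3 + q2 / 3 \<and> 0 < q0 + q1 + q2 + q3)"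

lemma Bernstein_cubic_pos:
  fixes b0 b1 b2 b3 s :: real
  assumes b: "0 < b0" "0 < b1" "0 < b2" "0 < b3" and s: "0 \<le> s" "s \<le> 1"
  shows "0 < b0 * (1 - s) ^ 3 + 3 * b1 * s * (1 - s) ^ 2 + 3 * b2 * s ^ 2 * (1 - s) + b3 * s ^ 3"
proof (cases "s = 0")
  case False
  then have "0 < b3 * s ^ 3"
    using b s by simp
  moreover have "0 \<le> b0 * (1 - s) ^ 3 + 3 * b1 * s * (1 - s) ^ 2 + 3 * b2 * s ^ 2 * (1 - s)"
    using b s by simp
  ultimately show ?thesis
    by linarith
qed (use b in simp)

lemma cubic_minorant_pos_of_certificate:
  assumes cert: "minorant_certificate c h" and u: "1 \<le> u" "u \<le> h"
  shows "0 < cubic_minorant c u"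
proof -
  define L where "L = h - 1"
  define q0 q1 q2 q3 where "q0 = c - c ^ 3" and "q1 = - L + 2 * c * L - 3 * c ^ 3 * L"
    and "q2 = c * L ^ 2 - 3 * c ^ 3 * L ^ 2" and "q3 = - (c ^ 3 * L ^ 3)"
  define s where "s = (u - 1) / L"
  have "0 < L" and b: "0 < q0" "0 < q0 + q1 / 3" "0 < q0 + 2 * q1 / 3 + q2 / 3" "0 < q0 + q1 + q2 + q3"
    using cert unfolding minorant_certificate_def L_def q0_def q1_def q2_def q3_def Let_def by auto
  then have s: "0 \<le> s" "s \<le> 1" "u = 1 + s * L"
    using u unfolding s_def L_def by (auto simp: field_simps)
  have "cubic_minorant c u = q0 * (1 - s) ^ 3 + 3 * (q0 + q1 / 3) * s * (1 - s) ^ 2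
      + 3 * (q0 + 2 * q1 / 3 + q2 / 3) * s ^ 2 * (1 - s) + (q0 + q1 + q2 + q3) * s ^ 3"
    unfolding s(3) cubic_minorant_def q0_def q1_def q2_def q3_def by algebra
  then show ?thesis
    using Bernstein_cubic_pos[OF b s(1,2)] by simp
qed

lemma cubic_minorant_pos_between:
  fixes a b r u :: real
  assumes r: "0 \<le> a" "a \<le> r" "r \<le> b" and "0 \<le> u"
    and pos: "0 < cubic_minorant a u" "0 < cubic_minorant b u"
  shows "0 < cubic_minorant r u"
proof (cases "r = b")
  case False
  then have "a < b" "r < b"
    using r by auto
  have "(b - a) * r ^ 3 \<le> (b - r) * a ^ 3 + (r - a) * b ^ 3"
  proof -
    have "(b - r) * a ^ 3 + (r - a) * b ^ 3 - (b - a) * r ^ 3 = (b - a) * (r - a) * (b - r) * (a + b + r)"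
      by algebra
    moreover have "0 \<le> (b - a) * (r - a) * (b - r) * (a + b + r)"
      using r \<open>r < b\<close> by (intro mult_nonneg_nonneg) auto
    ultimately show ?thesis
      by linarith
  qed
  then have "0 \<le> u ^ 3 * ((b - r) * a ^ 3 + (r - a) * b ^ 3 - (b - a) * r ^ 3)"
    using \<open>0 \<le> u\<close> by simp
  moreover have "(b - a) * cubic_minorant r u - ((b - r) * cubic_minorant a u + (r - a) * cubic_minorant b u)
    = u ^ 3 * ((b - r) * a ^ 3 + (r - a) * b ^ 3 - (b - a) * r ^ 3)"
    unfolding cubic_minorant_def by algebra
  moreover have "0 < (b - r) * cubic_minorant a u" "0 \<le> (r - a) * cubic_minorant b u"
    using pos r \<open>r < b\<close> by auto
  ultimately have "0 < (b - a) * cubic_minorant r u"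
    by linarith
  then show ?thesis
    using \<open>a < b\<close> by (simp add: zero_less_mult_iff)
qed (use pos in simp)

text \<open>Since u > 1 forces r > 1/4.84, the range of r is covered by four intervals [a, b];
  on each, the box [a, b] x [1, 4.84 b] is certified at r = a and r = b, and concavity
  in r does the rest.\<close>
lemma cubic_minorant_pos_small_r:
  fixes r u :: real
  assumes r: "0 < r" "r \<le> 43/100" and u: "1 < u" "u \<le> 484/100 * r"
  shows "0 < cubic_minorant r u"
proof -
  have step: "0 < cubic_minorant r u"
    if "a \<le> r" "r \<le> b" "u \<le> h" "0 \<le> a" "minorant_certificate a h" "minorant_certificate b h"
    for a b h :: real
    using that u by (intro cubic_minorant_pos_between[of a r b] cubic_minorant_pos_of_certificate) auto
  have "206/1000 \<le> r"
    using u by linarith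
  moreover have "minorant_certificate (206/1000) (121/100)" "minorant_certificate (25/100) (121/100)"
    "minorant_certificate (25/100) (1452/1000)" "minorant_certificate (3/10) (1452/1000)"
    "minorant_certificate (3/10) (17424/10000)" "minorant_certificate (36/100) (17424/10000)"
    "minorant_certificate (36/100) (20812/10000)" "minorant_certificate (43/100) (20812/10000)"
    by (simp_all add: minorant_certificate_def Let_def power_divide)
  ultimately show ?thesis
    using u r step[of "206/1000" "25/100" "121/100"] step[of "25/100" "3/10" "1452/1000"]
      step[of "3/10" "36/100" "17424/10000"] step[of "36/100" "43/100" "20812/10000"]
    by linarith
qed

lemma partial_theta_neg_pos_small_r:
  assumes r: "0 < r" "r \<le> 43/100" and rz: "1 < r * z" and z: "z \<le> 484/100"
  shows "0 < partial_theta r (- z)"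
proof -
  have "0 < r * z"
    using rz by linarith
  then have "0 < z"
    using r by (simp add: zero_less_mult_iff)
  then have "r ^ 3 * z \<le> (43/100) ^ 3 * (484/100)"
    using r z by (intro mult_mono power_mono) auto
  then have "cubic_minorant r (r * z) \<le> partial_theta r (- z)"
    using r \<open>0 < z\<close> by (intro cubic_minorant_le_partial_theta) (auto simp: power_divide)
  moreover have "0 < cubic_minorant r (r * z)"
    using r rz z by (intro cubic_minorant_pos_small_r) auto
  ultimately show ?thesis
    by linarith
qed

lemma partial_theta_neg_pos_by_qpoch_bound:
  fixes a b r z Z :: real
  assumes ab: "0 < a" "a \<le> r" "r \<le> b" "b < 1" and rz: "1 < r * z" and z: "z \<le> Z"
    and b4: "b ^ 4 * Z < 1"
    and small: "b * Z * qpoch a 4 ^ 3 < (1 - b ^ 2) / Z"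
      "b ^ 3 * Z ^ 2 * qpoch a 4 ^ 3 < (1 - b ^ 2) / Z"
      "b ^ 6 * Z ^ 3 * qpoch a 4 ^ 3 < (1 - b ^ 2) / Z"
  shows "0 < partial_theta r (- z)"
proof -
  have r: "0 < r" "r < 1"
    using ab by auto
  show ?thesis
  proof (rule partial_theta_neg_pos_by_bilateral[OF r rz])
    fix n assume n: "1 \<le> r ^ n * z" "r ^ Suc n * z < 1"
    have "0 < r ^ n * z"
      using n(1) by linarith
    then have "0 < z"
      using r by (simp add: zero_less_mult_iff)
    have "n \<noteq> 0"
      using n(2) rz by (cases n) auto
    moreover have "r ^ 4 * z \<le> b ^ 4 * Z"
      using ab \<open>0 < z\<close> z by (intro mult_mono power_mono) auto
    then have "r ^ 4 * z < r ^ n * z"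
      using b4 n(1) by linarith
    then have "n < 4"
      using r \<open>0 < z\<close> by simp
    ultimately have "n = 1 \<or> n = 2 \<or> n = 3"
      by auto
    moreover have "triangular 1 = 1" "triangular 2 = 3" "triangular 3 = 6"
      by (simp_all add: triangular_def)
    ultimately have "b ^ triangular n * Z ^ n * qpoch a 4 ^ 3 < (1 - b ^ 2) / Z"
      using small by auto
    moreover have "r ^ triangular n * z ^ n * qpoch_inf r ^ 3 \<le> b ^ triangular n * Z ^ n * qpoch a 4 ^ 3"
    proof (rule mult_mono)
      show "r ^ triangular n * z ^ n \<le> b ^ triangular n * Z ^ n"
        using ab \<open>0 < z\<close> z by (intro mult_mono power_mono) auto
      show "qpoch_inf r ^ 3 \<le> qpoch a 4 ^ 3"
        using qpoch_inf_le_qpoch[OF r, of 4] qpoch_antimono[of a r 4] qpoch_inf_pos[OF r] ab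
        by (intro power_mono) auto
    qed (use ab \<open>0 < z\<close> z qpoch_inf_pos[OF r] in auto)
    moreover have "(1 - b ^ 2) / Z \<le> (1 - r ^ 2) / z"
      using ab \<open>0 < z\<close> z by (intro frac_le power_mono) (auto simp: power_le_one)
    ultimately show "r ^ triangular n * z ^ n * qpoch_inf r ^ 3 < (1 - r ^ 2) / z"
      by linarith
  qed
qed

lemma partial_theta_neg_pos_medium_r:
  fixes r z :: real
  assumes r: "43/100 \<le> r" "r \<le> 66/100" and rz: "1 < r * z" and z: "z \<le> 484/100"
  shows "0 < partial_theta r (- z)"
proof -
  have qpoch_4: "qpoch a 4 = (1 - a) * (1 - a ^ 2) * (1 - a ^ 3) * (1 - a ^ 4)" for a
    by (simp add: qpoch_Suc eval_nat_numeral)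
  have on_interval: ?thesis if "a \<le> r" "r \<le> b" "0 < a" "b < 1" "b ^ 4 * (484/100) < 1"
    "b * (484/100) * qpoch a 4 ^ 3 < (1 - b ^ 2) / (484/100)"
    "b ^ 3 * (484/100) ^ 2 * qpoch a 4 ^ 3 < (1 - b ^ 2) / (484/100)"
    "b ^ 6 * (484/100) ^ 3 * qpoch a 4 ^ 3 < (1 - b ^ 2) / (484/100)" for a b :: real
    using that rz z by (intro partial_theta_neg_pos_by_qpoch_bound[of a r b z "484/100"]) auto
  consider "r \<le> 46/100" | "46/100 \<le> r" "r \<le> 505/1000" | "505/1000 \<le> r" "r \<le> 59/100"
    | "59/100 \<le> r"
    by linarith
  then show ?thesis
  proof cases
    case 1
    show ?thesis
      by (rule on_interval[of "43/100" "46/100"]) (use r 1 in \<open>simp_all add: qpoch_4 power_divide\<close>)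
  next
    case 2
    show ?thesis
      by (rule on_interval[of "46/100" "505/1000"]) (use 2 in \<open>simp_all add: qpoch_4 power_divide\<close>)
  next
    case 3
    show ?thesis
      by (rule on_interval[of "505/1000" "59/100"]) (use 3 in \<open>simp_all add: qpoch_4 power_divide\<close>)
  next
    case 4
    show ?thesis
      by (rule on_interval[of "59/100" "66/100"]) (use r 4 in \<open>simp_all add: qpoch_4 power_divide\<close>)
  qed
qed

lemma qpoch_inf_le_exp:
  assumes r: "0 < r" "r < 1"
  shows "qpoch_inf r \<le> (1 - r) * exp (- (r ^ 2 / (1 - r)))"
proof -
  have "qpoch_inf r \<le> (1 - r) * exp (- (r ^ 2 * (1 - r ^ m) / (1 - r)))" for m
  proof -
    have "(\<Prod>i=1..m. 1 - r ^ (1 + i)) \<le> (\<Prod>i=1..m. exp (- (r ^ (1 + i))))"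
    proof (rule prod_mono)
      fix i
      have "r ^ (1 + i) \<le> 1"
        using r by (intro power_le_one) auto
      moreover have "1 + - (r ^ (1 + i)) \<le> exp (- (r ^ (1 + i)))"
        by (rule exp_ge_add_one_self)
      ultimately show "0 \<le> 1 - r ^ (1 + i) \<and> 1 - r ^ (1 + i) \<le> exp (- (r ^ (1 + i)))"
        by simp
    qed
    also have "\<dots> = exp (- (\<Sum>i=1..m. r ^ (1 + i)))"
      by (simp add: exp_sum flip: sum_negf)
    also have "(\<Sum>i=1..m. r ^ (1 + i)) = (\<Sum>i<m. r ^ 2 * r ^ i)"
      by (rule sum.reindex_bij_witness[where j = "\<lambda>i. i - 1" and i = "\<lambda>i. i + 1"])
        (auto simp: power_add[symmetric])
    also have "\<dots> = r ^ 2 * (\<Sum>i<m. r ^ i)"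
      by (simp add: sum_distrib_left)
    also have "\<dots> = r ^ 2 * (1 - r ^ m) / (1 - r)"
      using r by (simp add: sum_gp_strict)
    finally have "(1 - r) * (\<Prod>i=1..m. 1 - r ^ (1 + i)) \<le> (1 - r) * exp (- (r ^ 2 * (1 - r ^ m) / (1 - r)))"
      using r by (intro mult_left_mono) auto
    moreover have "qpoch r (1 + m) = (1 - r) * (\<Prod>i=1..m. 1 - r ^ (1 + i))"
      unfolding qpoch_add by (simp add: qpoch_def)
    ultimately show ?thesis
      using qpoch_inf_le_qpoch[OF r, of "1 + m"] by linarith
  qed
  moreover have "(\<lambda>m. (1 - r) * exp (- (r ^ 2 * (1 - r ^ m) / (1 - r))))
      \<longlonglongrightarrow> (1 - r) * exp (- (r ^ 2 * (1 - 0) / (1 - r)))"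
    using r by (intro tendsto_intros LIMSEQ_power_zero) auto
  ultimately show ?thesis
    using LIMSEQ_le_const[of _ _ "qpoch_inf r"] by fastforce
qed

lemma power_triangular_mult_power_le_exp:
  fixes r z c :: real
  assumes r: "0 < r" "r < 1" and z: "0 \<le> z" "z \<le> exp c"
  shows "r ^ triangular n * z ^ n \<le> exp (c ^ 2 / (2 * (1 - r)))"
proof -
  define \<beta> where "\<beta> = 1 - r"
  have "0 < \<beta>"
    using r by (simp add: \<beta>_def)
  have "r \<le> exp (- \<beta>)"
    using exp_ge_add_one_self[of "- \<beta>"] by (simp add: \<beta>_def)
  then have "r ^ triangular n \<le> exp (- \<beta>) ^ triangular n"
    using r by (intro power_mono) auto
  also have "\<dots> = exp (- \<beta> * real (triangular n))"
    by (simp add: exp_of_nat_mult[symmetric] mult.commute)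
  also have "\<dots> \<le> exp (- \<beta> * (real n ^ 2 / 2))"
    using real_triangular_ge[of n] \<open>0 < \<beta>\<close> by simp
  finally have "r ^ triangular n * z ^ n \<le> exp (- \<beta> * (real n ^ 2 / 2)) * exp c ^ n"
    using z by (intro mult_mono power_mono) auto
  also have "\<dots> = exp (c ^ 2 / (2 * \<beta>) - (\<beta> * real n - c) ^ 2 / (2 * \<beta>))"
    using \<open>0 < \<beta>\<close> by (simp add: exp_of_nat_mult[symmetric] exp_add[symmetric] field_simps power2_eq_square)
  also have "\<dots> \<le> exp (c ^ 2 / (2 * \<beta>))"
    using \<open>0 < \<beta>\<close> by simp
  finally show ?thesis
    by (simp add: \<beta>_def)
qed

lemma exp_ge_484: "484/100 \<le> exp (16/10 :: real)"
proof -
  have "(484/100 :: real) \<le> (1 + 2/10 + (2/10) ^ 2 / 2) ^ 8"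
    by (simp add: power_divide)
  also have "\<dots> \<le> exp (2/10) ^ 8"
    by (intro power_mono exp_lower_Taylor_quadratic) (simp_all add: power_divide)
  also have "\<dots> = exp (16/10)"
    by (simp add: exp_of_nat_mult[symmetric])
  finally show ?thesis .
qed

lemma power_triangular_mult_qpoch_inf_cube_le:
  fixes r z :: real
  assumes r: "66/100 \<le> r" "r < 1" and z: "0 \<le> z" "z \<le> 484/100"
  shows "r ^ triangular n * z ^ n * qpoch_inf r ^ 3 \<le> (1 - r) ^ 3"
proof -
  define \<beta> where "\<beta> = 1 - r"
  have r': "0 < r" "r < 1" and "0 < \<beta>"
    using r by (auto simp: \<beta>_def)
  have "r ^ triangular n * z ^ n \<le> exp ((16/10) ^ 2 / (2 * \<beta>))"
    using power_triangular_mult_power_le_exp[OF r'] z exp_ge_484 by (simp add: \<beta>_def)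
  moreover have "qpoch_inf r ^ 3 \<le> (\<beta> * exp (- (r ^ 2 / \<beta>))) ^ 3"
    using qpoch_inf_le_exp[OF r'] qpoch_inf_pos[OF r'] by (intro power_mono) (auto simp: \<beta>_def)
  ultimately have "r ^ triangular n * z ^ n * qpoch_inf r ^ 3
      \<le> exp ((16/10) ^ 2 / (2 * \<beta>)) * (\<beta> * exp (- (r ^ 2 / \<beta>))) ^ 3"
    using qpoch_inf_pos[OF r'] z r' by (intro mult_mono) auto
  also have "\<dots> = \<beta> ^ 3 * exp ((128/100 - 3 * r ^ 2) / \<beta>)"
    by (simp add: power_mult_distrib exp_of_nat_mult[symmetric] exp_add[symmetric] power_divide
        diff_divide_distrib algebra_simps)
  also have "\<dots> \<le> \<beta> ^ 3"
  proof -
    have "(66/100) ^ 2 \<le> r ^ 2"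
      using r by (intro power_mono) auto
    then have "(128/100 - 3 * r ^ 2) / \<beta> \<le> 0"
      using \<open>0 < \<beta>\<close> by (intro divide_nonpos_pos) (auto simp: power_divide)
    then show ?thesis
      using \<open>0 < \<beta>\<close> by simp
  qed
  finally show ?thesis
    by (simp add: \<beta>_def)
qed

lemma partial_theta_neg_pos_large_r:
  fixes r z :: real
  assumes r: "66/100 \<le> r" "r < 1" and rz: "1 < r * z" and z: "z \<le> 484/100"
  shows "0 < partial_theta r (- z)"
proof -
  have r': "0 < r" "r < 1"
    using r by auto
  have "0 < r * z"
    using rz by linarith
  then have "0 < z"
    using r' by (simp add: zero_less_mult_iff)
  have "(1 - r) ^ 2 \<le> (34/100) ^ 2"
    using r by (intro power_mono) auto
  then have "484/100 * (1 - r) ^ 2 * (1 - r) < (1 + r) * (1 - r)"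
    using r by (intro mult_strict_right_mono) (auto simp: power_divide)
  then have "(1 - r) ^ 3 < (1 - r ^ 2) / (484/100)"
    by (simp add: field_simps power3_eq_cube power2_eq_square)
  also have "\<dots> \<le> (1 - r ^ 2) / z"
    using r' \<open>0 < z\<close> z by (intro divide_left_mono) (auto simp: power_le_one)
  finally show ?thesis
    using power_triangular_mult_qpoch_inf_cube_le[OF r _ z] \<open>0 < z\<close>
    by (intro partial_theta_neg_pos_by_bilateral[OF r' rz]) (auto intro: le_less_trans)
qed

lemma partial_theta_neg_pos:
  fixes r z :: real
  assumes r: "0 < r" "r < 1" and z: "0 \<le> z" "z \<le> 484/100"
  shows "0 < partial_theta r (- z)"
proof -
  consider "r * z \<le> 1" | "1 < r * z" "r \<le> 43/100" | "1 < r * z" "43/100 \<le> r" "r \<le> 66/100"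
    | "1 < r * z" "66/100 \<le> r"
    by linarith
  then show ?thesis
    by cases (use r z partial_theta_neg_pos_mult_le_1 partial_theta_neg_pos_small_r
        partial_theta_neg_pos_medium_r partial_theta_neg_pos_large_r in blast)+
qed

section \<open>Zeros on the imaginary axis\<close>

lemma Im_theta_imaginary:
  fixes q y :: real
  assumes q: "0 < q" "q < 1"
  shows "Im (theta q (\<i> * y)) = q * y * partial_theta (q ^ 4) (- (q * y ^ 2))"
proof -
  define t where "t j = complex_of_real (q ^ triangular j) * (\<i> * y) ^ j" for j
  define g where "g k = q * y * ((q ^ 4) ^ triangular k * (- (q * y ^ 2)) ^ k)" for k
  have "summable (\<lambda>j. norm (t j))"
    using summable_partial_theta[of q "\<bar>y\<bar>"] q by (simp add: t_def norm_mult norm_power)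
  moreover have "theta q (\<i> * y) = suminf t"
    unfolding theta_def t_def triangular_def ..
  ultimately have Im_sum: "Im (theta q (\<i> * y)) = (\<Sum>j. Im (t j))"
    using Im_suminf[OF summable_norm_cancel] by simp
  have Im_even: "Im (t (2 * k)) = 0" for k
  proof -
    have "(\<i> * complex_of_real y) ^ (2 * k) = complex_of_real ((- (y ^ 2)) ^ k)"
      by (simp add: power_mult power_mult_distrib)
    then show ?thesis
      by (simp add: t_def)
  qed
  have Im_odd: "Im (t (2 * k + 1)) = g k" for k
  proof -
    have "(\<i> * complex_of_real y) ^ (2 * k + 1) = \<i> * complex_of_real (y * (- (y ^ 2)) ^ k)"
      by (simp add: power_add power_mult power_mult_distrib)
    then have "t (2 * k + 1) = \<i> * complex_of_real (q ^ triangular (2 * k + 1) * (y * (- (y ^ 2)) ^ k))"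
      unfolding t_def by simp
    moreover have "(- (q * y ^ 2)) ^ k = q ^ k * (- (y ^ 2)) ^ k"
      by (simp flip: power_mult_distrib)
    then have "q ^ triangular (2 * k + 1) * (y * (- (y ^ 2)) ^ k) = g k"
      unfolding triangular_odd g_def by (simp add: power_add power_mult[symmetric] algebra_simps)
    ultimately show ?thesis
      by simp
  qed
  have "(\<lambda>j. Im (t j)) = (\<lambda>j. if even j then 0 else g ((j - 1) div 2))"
  proof
    fix j
    show "Im (t j) = (if even j then 0 else g ((j - 1) div 2))"
      by (cases "even j") (auto simp: Im_even Im_odd[simplified] elim!: evenE oddE)
  qed
  moreover have "g sums (q * y * partial_theta (q ^ 4) (- (q * y ^ 2)))"
    unfolding g_def partial_theta_def using q
    by (intro sums_mult summable_sums summable_partial_theta) (auto simp: power_less_one_iff)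
  ultimately have "(\<lambda>j. Im (t j)) sums (q * y * partial_theta (q ^ 4) (- (q * y ^ 2)))"
    using sums_if' by metis
  then show ?thesis
    unfolding Im_sum by (rule sums_unique[symmetric])
qed

lemma theta_imaginary_ne_zero:
  fixes q y :: real
  assumes q: "0 < q" "q < 1" and y: "\<bar>y\<bar> \<le> 2.2"
  shows "theta q (\<i> * y) \<noteq> 0"
proof (cases "y = 0")
  case True
  have "theta q 0 = 1"
    unfolding theta_def by (subst powser_zero) simp
  with True show ?thesis
    by simp
next
  case False
  have "y ^ 2 \<le> 2.2 ^ 2"
    using y by (metis abs_ge_zero power2_abs power_mono)
  moreover have "q * y ^ 2 \<le> y ^ 2"
    using q by (intro mult_left_le_one_le) auto
  ultimately have "0 < partial_theta (q ^ 4) (- (q * y ^ 2))"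
    using q by (intro partial_theta_neg_pos) (auto simp: power_less_one_iff power_divide)
  then have "Im (theta q (\<i> * y)) \<noteq> 0"
    using q False by (simp add: Im_theta_imaginary)
  then show ?thesis
    by auto
qed

theorem lemma6:
  fixes q :: real
  assumes "0 < q" and "q < 1"
  shows "(\<forall>y::real. \<bar>y\<bar> \<le> 2.2 \<longrightarrow> theta q (\<i> * complex_of_real y) \<noteq> 0)
       \<and> (\<forall>y::real. \<bar>y\<bar> \<le> 3 / sqrt 2 \<longrightarrow> theta q (\<i> * complex_of_real y) \<noteq> 0)"
proof -
  have "3 / sqrt 2 \<le> (2.2 :: real)"
    by (rule power2_le_imp_le) (simp_all add: power_divide)
  then show ?thesis
    using theta_imaginary_ne_zero[OF assms] by fastforce
qed

end
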